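(* The closure of the set of periodic points of $\Phi_{\mathrm{Id}}\colon\mathrm{M}\mapsto\mathrm{M}^2$ on $\mathcal{M}(2;\mathbb{C})$ is $\{\mathbf{0}\}\cup\Lambda^0\cup\Lambda^1\cup\Lambda^2$, where $\Lambda^0=\{\mathrm{M}:\det\mathrm{M}=0,\ |\mathrm{tr}\,\mathrm{M}|=1\}$, $\Lambda^1=\{\mathrm{M}:(\mathrm{tr}\,\mathrm{M})^2-4\det\mathrm{M}=0,\ |\det\mathrm{M}|=1\}$, $\Lambda^2=\{\mathrm{M}:\frac{(\mathrm{tr}\,\mathrm{M})^2}{\det\mathrm{M}}\in[0,4[,\ |\det\mathrm{M}|=1\}$.
   Context: $\mathbf{0}$ is the zero matrix. A point is periodic if $\Phi_{\mathrm{Id}}^k(\mathrm{M})=\mathrm{M}$ for some $k\geq1$. ($\Lambda^0$: one eigenvalue of modulus $1$ and the other zero; $\Lambda^1$: a double eigenvalue of modulus $1$; $\Lambda^2$: two distinct eigenvalues of modulus $1$.) *)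

theory Defs
  imports "HOL-Analysis.Analysis"
begin

type_synonym cmat2 = "complex^2^2"

definition Phi_Id :: "cmat2 \<Rightarrow> cmat2" where
  "Phi_Id M = M ** M"

definition periodic_pt :: "cmat2 \<Rightarrow> bool" where
  "periodic_pt M \<longleftrightarrow> (\<exists>k::nat. k \<ge> 1 \<and> (Phi_Id ^^ k) M = M)"

definition Lambda0 :: "cmat2 set" where
  "Lambda0 = {M. det M = 0 \<and> cmod (trace M) = 1}"

definition Lambda1 :: "cmat2 set" where
  "Lambda1 = {M. (trace M)^2 - 4 * det M = 0 \<and> cmod (det M) = 1}"

definition Lambda2 :: "cmat2 set" where
  "Lambda2 = {M. (\<exists>r::real. 0 \<le> r \<and> r < 4 \<and> (trace M)^2 / det M = complex_of_real r)
                 \<and> cmod (det M) = 1}"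

end

theory Submission
  imports Defs
begin

text \<open>Every complex 2x2 matrix is similar to an upper triangular one, and squaring commutes
with similarity; k squarings raise the diagonal entries of a triangular matrix to the power 2^k.
Hence the eigenvalues of a periodic point are 0 or of modulus 1, not both 0 unless the matrix
vanishes. In terms of the eigenvalues l, m this is exactly membership in the Lambda sets, and
Lambda1 \<union> Lambda2 is the closed condition |det| = 1, tr = det * cnj tr, |tr| \<le> 2.
Conversely a triangular matrix with distinct diagonal entries satisfying z^(2^k) = z is
periodic, and unimodular eigenvalues are approximated by distinct (2^(n+2) - 1)-st roots of
unity.\<close>

lemma mat2_eq_iff:
  "(A::'a^2^2) = B \<longleftrightarrow> A$1$1 = B$1$1 \<and> A$1$2 = B$1$2 \<and> A$2$1 = B$2$1 \<and> A$2$2 = B$2$2"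
  by (auto simp: vec_eq_iff forall_2)

lemma matrix_mult_nth_2 [simp]:
  "((A::'a::semiring_1^2^'m) ** (B::'a^'n^2)) $ i $ j = A$i$1 * B$1$j + A$i$2 * B$2$j"
  by (simp add: matrix_matrix_mult_def sum_2)

lemma mat_nth_2 [simp]:
  "(mat x :: 'a::zero^2^2) $ 1 $ 1 = x" "(mat x :: 'a^2^2) $ 1 $ 2 = 0"
  "(mat x :: 'a^2^2) $ 2 $ 1 = 0" "(mat x :: 'a^2^2) $ 2 $ 2 = x"
  by (simp_all add: mat_def)

lemma trace_2: "trace (A::'a::semiring_1^2^2) = A$1$1 + A$2$2"
  by (simp add: trace_def sum_2)

lemma trace_similar:
  fixes P Q T :: "'a::comm_ring_1^'n^'n"
  assumes "Q ** P = mat 1"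
  shows "trace (P ** T ** Q) = trace T"
  by (metis assms matrix_mul_assoc matrix_mul_rid trace_mul_sym)

lemma det_similar:
  fixes P Q T :: "'a::comm_ring_1^'n^'n"
  assumes "P ** Q = mat 1"
  shows "det (P ** T ** Q) = det T"
proof -
  have "det P * det Q = 1" using assms by (metis det_I det_mul)
  then show ?thesis by (simp add: det_mul) (metis mult.commute mult.left_commute mult_1_right)
qed

lemma exists_quadratic_root: "\<exists>l::complex. l^2 - t * l + d = 0"
proof -
  let ?l = "(t + csqrt (t^2 - 4*d)) / 2"
  have "csqrt (t^2 - 4*d) ^ 2 = t^2 - 4*d" by simp
  then have "?l^2 - t * ?l + d = 0" by (simp add: field_simps power2_eq_square) algebra
  then show ?thesis by blast
qed

lemma cmat2_similar_upper_triangular: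
  fixes M :: cmat2
  shows "\<exists>P Q T :: cmat2. P ** Q = mat 1 \<and> Q ** P = mat 1 \<and> T$2$1 = 0 \<and> M = P ** T ** Q"
proof (cases "M$2$1 = 0")
  case True
  then show ?thesis by (intro exI[of _ "mat 1"] exI[of _ M]) simp
next
  case False
  define a b c d where "a = M$1$1" and "b = M$1$2" and "c = M$2$1" and "d = M$2$2"
  obtain l where l: "l^2 - (a + d) * l + (a * d - b * c) = 0"
    using exists_quadratic_root by blast
  \<comment> \<open>the columns of P are an eigenvector for the eigenvalue l and the first unit vector\<close>
  define P :: cmat2 where "P = vector [vector [l - d, 1], vector [c, 0]]"
  define Q :: cmat2 where "Q = vector [vector [0, 1 / c], vector [1, (d - l) / c]]"
  have c: "c \<noteq> 0" using False c_def by simp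
  have PQ: "P ** Q = mat 1" and QP: "Q ** P = mat 1"
    using c by (simp_all add: mat2_eq_iff P_def Q_def field_simps)
  have "(Q ** M ** P) $ 2 $ 1 = 0"
    using c l unfolding P_def Q_def a_def b_def c_def d_def
    by (simp add: field_simps power2_eq_square) algebra
  moreover have "M = P ** (Q ** M ** P) ** Q"
    by (simp add: matrix_mul_assoc PQ) (simp add: matrix_mul_assoc[symmetric] PQ)
  ultimately show ?thesis using PQ QP by blast
qed

lemma cmat2_triangularize:
  fixes M :: cmat2
  obtains P Q T :: cmat2 where "P ** Q = mat 1" "Q ** P = mat 1" "T$2$1 = 0" "M = P ** T ** Q"
    "trace M = T$1$1 + T$2$2" "det M = T$1$1 * T$2$2"
proof -
  obtain P Q T :: cmat2 where PQ: "P ** Q = mat 1" "Q ** P = mat 1"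
    and T: "T$2$1 = 0" "M = P ** T ** Q"
    using cmat2_similar_upper_triangular by blast
  moreover have "trace M = T$1$1 + T$2$2" "det M = T$1$1 * T$2$2"
    unfolding T(2) trace_similar[OF PQ(2)] det_similar[OF PQ(1)] using T(1)
    by (simp_all add: trace_2 det_2)
  ultimately show ?thesis using that by blast
qed

lemma funpow_Phi_Id_similar:
  assumes "Q ** P = (mat 1 :: cmat2)"
  shows "(Phi_Id ^^ k) (P ** A ** Q) = P ** (Phi_Id ^^ k) A ** Q"
proof (induction k)
  case (Suc k)
  let ?X = "(Phi_Id ^^ k) A"
  have "(P ** ?X ** Q) ** (P ** ?X ** Q) = P ** (?X ** ?X) ** Q"
    by (simp add: matrix_mul_assoc) (simp add: matrix_mul_assoc[symmetric] assms)
  then show ?case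
    using Suc.IH by (simp add: Phi_Id_def[of ?X] Phi_Id_def[of "P ** ?X ** Q"])
qed simp

lemma periodic_pt_similar_iff:
  assumes "P ** Q = (mat 1 :: cmat2)" "Q ** P = mat 1"
  shows "periodic_pt (P ** T ** Q) \<longleftrightarrow> periodic_pt T"
proof -
  have cancel: "P ** X ** Q = P ** Y ** Q \<longleftrightarrow> X = Y" for X Y :: cmat2
  proof
    assume "P ** X ** Q = P ** Y ** Q"
    then have "Q ** (P ** X ** Q) ** P = Q ** (P ** Y ** Q) ** P" by simp
    then show "X = Y"
      by (simp add: matrix_mul_assoc assms) (simp add: matrix_mul_assoc[symmetric] assms)
  qed simp
  show ?thesis
    unfolding periodic_pt_def funpow_Phi_Id_similar[OF assms(2)] cancel ..
qed

lemma power_two_power_Suc: "(x::'a::monoid_mult) ^ (2 ^ Suc k) = x ^ (2 ^ k) * x ^ (2 ^ k)"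
  by (simp add: power_add[symmetric] mult_2)

lemma funpow_Phi_Id_upper_triangular:
  assumes "(T::cmat2)$2$1 = 0"
  shows "(Phi_Id ^^ k) T $ 2 $ 1 = 0 \<and> (Phi_Id ^^ k) T $ 1 $ 1 = T$1$1 ^ (2^k)
    \<and> (Phi_Id ^^ k) T $ 2 $ 2 = T$2$2 ^ (2^k)
    \<and> (T$1$1 - T$2$2) * (Phi_Id ^^ k) T $ 1 $ 2 = T$1$2 * (T$1$1 ^ (2^k) - T$2$2 ^ (2^k))"
proof (induction k)
  case (Suc k)
  define X where "X = (Phi_Id ^^ k) T"
  define a b c A B where "a = T$1$1" and "b = T$2$2" and "c = T$1$2"
    and "A = T$1$1 ^ (2^k)" and "B = T$2$2 ^ (2^k)"
  have X: "X$2$1 = 0" "X$1$1 = A" "X$2$2 = B" "(a - b) * X$1$2 = c * (A - B)"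
    using Suc.IH unfolding X_def a_def b_def c_def A_def B_def by simp_all
  have "(a - b) * (X$1$1 * X$1$2 + X$1$2 * X$2$2) = ((a - b) * X$1$2) * (A + B)"
    unfolding X(2,3) by (simp add: algebra_simps)
  also have "\<dots> = c * (A * A - B * B)"
    unfolding X(4) by (simp add: algebra_simps)
  finally have "(a - b) * (X ** X) $ 1 $ 2 = c * (A * A - B * B)" by simp
  moreover have "(Phi_Id ^^ Suc k) T = X ** X"
    unfolding X_def by (simp add: Phi_Id_def[of "(Phi_Id ^^ k) T"])
  ultimately show ?case
    using X unfolding a_def b_def c_def A_def B_def
    by (simp add: power_two_power_Suc del: power_Suc)
qed (use assms in simp)

lemma cmod_parallelogram:
  "(cmod (x + y))^2 + (cmod (x - y))^2 = 2 * (cmod x)^2 + 2 * (cmod y)^2"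
  unfolding cmod_power2 by (simp add: power2_eq_square algebra_simps)

lemma eq_unit_times_cnj_iff:
  assumes "cmod d = 1"
  shows "t = d * cnj t \<longleftrightarrow> t^2 = d * of_real ((cmod t)^2)"
proof
  assume "t = d * cnj t"
  then have "t^2 = d * (t * cnj t)" by (metis mult.left_commute power2_eq_square)
  then show "t^2 = d * of_real ((cmod t)^2)" by (metis complex_norm_square)
next
  assume "t^2 = d * of_real ((cmod t)^2)"
  then have "t * t = t * (d * cnj t)"
    by (metis complex_norm_square mult.left_commute power2_eq_square)
  then show "t = d * cnj t" using assms by (cases "t = 0") auto
qed

definition unit_circle_trace_det :: "complex \<Rightarrow> complex \<Rightarrow> bool" where
  "unit_circle_trace_det t d \<longleftrightarrow> cmod d = 1 \<and> t = d * cnj t \<and> cmod t \<le> 2"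

lemma unit_circle_trace_det_iff_real_ratio:
  assumes "cmod d = 1"
  shows "unit_circle_trace_det t d \<longleftrightarrow> (\<exists>r. 0 \<le> r \<and> r \<le> 4 \<and> t^2 = d * of_real r)"
proof
  assume "unit_circle_trace_det t d"
  then have "t^2 = d * of_real ((cmod t)^2)" "(cmod t)^2 \<le> 2^2"
    using assms eq_unit_times_cnj_iff unfolding unit_circle_trace_det_def
    by (blast, intro power_mono) simp_all
  then show "\<exists>r. 0 \<le> r \<and> r \<le> 4 \<and> t^2 = d * of_real r"
    by (intro exI[of _ "(cmod t)^2"]) simp
next
  assume "\<exists>r. 0 \<le> r \<and> r \<le> 4 \<and> t^2 = d * of_real r"
  then obtain r where r: "0 \<le> r" "r \<le> 4" "t^2 = d * of_real r" by blast
  then have "(cmod t)^2 = r" using assms by (metis norm_mult norm_of_real norm_power abs_of_nonneg mult_1)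
  then have "t = d * cnj t" "(cmod t)^2 \<le> 2^2"
    using r eq_unit_times_cnj_iff[OF assms] by (metis, simp)
  then show "unit_circle_trace_det t d"
    using assms power2_le_imp_le[of "cmod t" 2] unfolding unit_circle_trace_det_def by simp
qed

lemma Lambda1_Un_Lambda2: "Lambda1 \<union> Lambda2 = {M. unit_circle_trace_det (trace M) (det M)}"
proof -
  have ratio: "(t^2 - 4 * d = 0 \<or> (\<exists>r. 0 \<le> r \<and> r < 4 \<and> t^2 / d = of_real r))
      \<longleftrightarrow> (\<exists>r. 0 \<le> r \<and> r \<le> 4 \<and> t^2 = d * of_real r)" if "d \<noteq> 0" for t d :: complex
  proof -
    have "t^2 / d = of_real r \<longleftrightarrow> t^2 = d * of_real r" for r
      using that by (auto simp: field_simps)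
    moreover have "t^2 - 4 * d = 0 \<longleftrightarrow> t^2 = d * of_real 4" by (simp add: algebra_simps)
    ultimately show ?thesis by (smt (verit))
  qed
  have "M \<in> Lambda1 \<union> Lambda2 \<longleftrightarrow> unit_circle_trace_det (trace M) (det M)" for M
  proof (cases "cmod (det M) = 1")
    case True
    then have "det M \<noteq> 0" by auto
    then show ?thesis
      using True ratio[of "det M" "trace M"]
      unfolding Lambda1_def Lambda2_def unit_circle_trace_det_iff_real_ratio[OF True] by blast
  qed (simp add: Lambda1_def Lambda2_def unit_circle_trace_det_def)
  then show ?thesis by blast
qed

lemma unit_circle_trace_det_sum_prod_iff:
  "unit_circle_trace_det (l + m) (l * m) \<longleftrightarrow> cmod l = 1 \<and> cmod m = 1"
proof
  assume "cmod l = 1 \<and> cmod m = 1"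
  then have "l * cnj l = 1" "m * cnj m = 1" "cmod (l * m) = 1"
    by (simp_all add: norm_mult flip: complex_norm_square)
  moreover have "l * m * cnj (l + m) = (l * cnj l) * m + (m * cnj m) * l"
    by (simp add: algebra_simps)
  moreover have "cmod (l + m) \<le> 2"
    using norm_triangle_ineq[of l m] \<open>cmod l = 1 \<and> cmod m = 1\<close> by simp
  ultimately show "unit_circle_trace_det (l + m) (l * m)"
    unfolding unit_circle_trace_det_def by (simp add: add.commute)
next
  assume "unit_circle_trace_det (l + m) (l * m)"
  then have d: "cmod (l * m) = 1" and t: "(l + m)^2 = l * m * of_real ((cmod (l + m))^2)"
    and "cmod (l + m) \<le> 2"
    using eq_unit_times_cnj_iff unfolding unit_circle_trace_det_def by blast+
  \<comment> \<open>\<open>(l - m)\<^sup>2 = t\<^sup>2 - 4 d = d (|t|\<^sup>2 - 4)\<close>, so by the parallelogram law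
    \<open>|l|\<^sup>2 + |m|\<^sup>2 = 2 = 2 |l| |m|\<close>\<close>
  have "(l - m)^2 = l * m * of_real ((cmod (l + m))^2 - 4)"
    using t by (simp add: algebra_simps power2_eq_square)
  then have "(cmod (l - m))^2 = cmod (l * m) * \<bar>(cmod (l + m))^2 - 4\<bar>"
    by (metis norm_mult norm_of_real norm_power)
  also have "\<dots> = 4 - (cmod (l + m))^2"
    using d \<open>cmod (l + m) \<le> 2\<close> abs_le_square_iff[of "cmod (l + m)" 2] by simp
  finally have "(cmod (l - m))^2 = 4 - (cmod (l + m))^2" .
  then have "(cmod l)^2 + (cmod m)^2 = 2 * (cmod l * cmod m)"
    using cmod_parallelogram[of l m] d by (simp add: norm_mult)
  moreover have "(cmod l - cmod m)^2 = (cmod l)^2 + (cmod m)^2 - 2 * (cmod l * cmod m)"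
    by (simp add: power2_diff)
  ultimately have "cmod l = cmod m" by simp
  moreover from this have "(cmod l)^2 = 1^2"
    using d by (simp add: norm_mult power2_eq_square)
  ultimately show "cmod l = 1 \<and> cmod m = 1"
    using power2_eq_iff_nonneg[of "cmod l" 1] by simp
qed

definition unit_or_zero_pair :: "complex \<Rightarrow> complex \<Rightarrow> bool" where
  "unit_or_zero_pair l m \<longleftrightarrow> (l = 0 \<or> cmod l = 1) \<and> (m = 0 \<or> cmod m = 1) \<and> (l \<noteq> 0 \<or> m \<noteq> 0)"

lemma Lambda_iff_unit_or_zero_pair:
  assumes "trace M = l + m" "det M = l * m"
  shows "M \<in> Lambda0 \<union> Lambda1 \<union> Lambda2 \<longleftrightarrow> unit_or_zero_pair l m"
proof -
  have "M \<in> Lambda0 \<longleftrightarrow> (l = 0 \<and> cmod m = 1) \<or> (m = 0 \<and> cmod l = 1)"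
    using assms by (auto simp: Lambda0_def)
  moreover have "M \<in> Lambda1 \<union> Lambda2 \<longleftrightarrow> cmod l = 1 \<and> cmod m = 1"
    using assms unit_circle_trace_det_sum_prod_iff by (simp add: Lambda1_Un_Lambda2)
  ultimately show ?thesis unfolding Un_assoc unit_or_zero_pair_def by auto
qed

lemma closed_Lambda: "closed ({mat 0} \<union> Lambda0 \<union> Lambda1 \<union> Lambda2)"
proof -
  have [continuous_intros]:
    "continuous_on UNIV (\<lambda>M::cmat2. det M)" "continuous_on UNIV (\<lambda>M::cmat2. trace M)"
    unfolding det_2 trace_2 by (intro continuous_intros)+
  have "closed Lambda0" "closed (Lambda1 \<union> Lambda2)"
    unfolding Lambda0_def Lambda1_Un_Lambda2 unit_circle_trace_det_def
    by (intro closed_Collect_conj closed_Collect_eq closed_Collect_le continuous_intros)+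
  then show ?thesis unfolding Un_assoc by (metis closed_Un closed_singleton)
qed

lemma power_eq_self_imp_zero_or_unit:
  fixes z :: "'a::real_normed_div_algebra"
  assumes "z ^ n = z" "n \<ge> 2"
  shows "z = 0 \<or> norm z = 1"
proof (cases "z = 0")
  case False
  have "z * z ^ (n - 1) = z * 1"
    using assms by (metis Suc_diff_1 mult_1_right order_less_le_trans pos2 power_Suc)
  then have "z ^ (n - 1) = 1" using False by simp
  then show ?thesis using power_eq_1_iff assms(2) by fastforce
qed simp

lemma periodic_upper_triangular_eigenvalues:
  assumes "periodic_pt T" "T$2$1 = 0"
  shows "T = mat 0 \<or> unit_or_zero_pair (T$1$1) (T$2$2)"
proof -
  obtain k where k: "k \<ge> 1" "(Phi_Id ^^ k) T = T"
    using assms(1) unfolding periodic_pt_def by blast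
  have "T$1$1 ^ (2^k) = T$1$1" "T$2$2 ^ (2^k) = T$2$2"
    using funpow_Phi_Id_upper_triangular[OF assms(2), of k] k(2) by auto
  moreover have "2 \<le> (2::nat) ^ k" using power_increasing[of 1 k "2::nat"] k(1) by simp
  ultimately have diag: "T$1$1 = 0 \<or> cmod (T$1$1) = 1" "T$2$2 = 0 \<or> cmod (T$2$2) = 1"
    using power_eq_self_imp_zero_or_unit by blast+
  have "T = mat 0" if "T$1$1 = 0" "T$2$2 = 0"
  proof -
    have "Phi_Id T = mat 0" using that assms(2) by (simp add: Phi_Id_def mat2_eq_iff)
    moreover have "(Phi_Id ^^ j) (mat 0) = mat 0" for j
      by (induction j) (simp_all add: Phi_Id_def mat2_eq_iff)
    moreover obtain j where "k = Suc j" using k(1) by (cases k) auto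
    ultimately show ?thesis using k(2) by (metis funpow_Suc_right o_apply)
  qed
  then show ?thesis using diag unfolding unit_or_zero_pair_def by blast
qed

lemma periodic_pt_in_Lambda:
  assumes "periodic_pt M"
  shows "M \<in> {mat 0} \<union> Lambda0 \<union> Lambda1 \<union> Lambda2"
proof -
  obtain P Q T :: cmat2 where PQ: "P ** Q = mat 1" "Q ** P = mat 1"
    and T: "T$2$1 = 0" "M = P ** T ** Q" "trace M = T$1$1 + T$2$2" "det M = T$1$1 * T$2$2"
    by (rule cmat2_triangularize)
  have "T = mat 0 \<or> unit_or_zero_pair (T$1$1) (T$2$2)"
    using assms periodic_upper_triangular_eigenvalues periodic_pt_similar_iff[OF PQ] T by auto
  then show ?thesis
    using Lambda_iff_unit_or_zero_pair T by auto
qed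

definition root_approx :: "nat \<Rightarrow> real \<Rightarrow> int \<Rightarrow> complex" where
  "root_approx N \<theta> e = cis (2 * pi * of_int (\<lfloor>\<theta> * N / (2 * pi)\<rfloor> + e) / N)"

lemma root_approx_power:
  assumes "N > 0"
  shows "root_approx N \<theta> e ^ N = 1"
proof -
  let ?j = "real_of_int (\<lfloor>\<theta> * N / (2 * pi)\<rfloor> + e)"
  have "root_approx N \<theta> e ^ N = cis (real N * (2 * pi * ?j / N))"
    unfolding root_approx_def Complex.DeMoivre ..
  also have "\<dots> = cis (2 * pi * ?j)" using assms by simp
  finally show ?thesis by simp
qed

lemma root_approx_Suc_neq:
  assumes "N \<ge> 2"
  shows "root_approx N \<theta> (e + 1) \<noteq> root_approx N \<theta> e"
proof
  assume "root_approx N \<theta> (e + 1) = root_approx N \<theta> e"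
  moreover have "root_approx N \<theta> (e + 1) = root_approx N \<theta> e * cis (2 * pi / N)"
    unfolding root_approx_def cis_mult using assms by (simp add: field_simps)
  ultimately have "cis (2 * pi / N) = 1" by (simp add: root_approx_def)
  then have "cos (2 * pi / N) = 1" by (metis cis.sel(1) one_complex.sel(1))
  then obtain k :: int where "2 * pi / N = of_int k * 2 * pi" using cos_one_2pi_int by blast
  then have "of_int k * real N = 1" using assms by (simp add: field_simps)
  then have "k * int N = 1" by (metis of_int_1 of_int_eq_iff of_int_mult of_int_of_nat_eq)
  then show False using assms zmult_eq_1_iff[of k "int N"] by simp
qed

lemma root_approx_tendsto:
  assumes "filterlim N at_top sequentially" "\<And>n. e n \<in> {0..1}"
  shows "(\<lambda>n. root_approx (N n) \<theta> (e n)) \<longlonglongrightarrow> cis \<theta>"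
proof -
  define x where "x n = 2 * pi * of_int (\<lfloor>\<theta> * N n / (2 * pi)\<rfloor> + e n) / N n" for n
  have bound: "norm (x n - \<theta>) \<le> 2 * pi / N n" if "N n > 0" for n
  proof -
    define y where "y = \<theta> * N n / (2 * pi)"
    have "of_int \<lfloor>y\<rfloor> \<le> y" "y < of_int \<lfloor>y\<rfloor> + 1" by linarith+
    moreover have "0 \<le> real_of_int (e n)" "real_of_int (e n) \<le> 1" using assms(2)[of n] by simp_all
    ultimately have "\<bar>of_int (\<lfloor>y\<rfloor> + e n) - y\<bar> \<le> 1"
      unfolding abs_le_iff of_int_add by linarith
    moreover have "x n - \<theta> = 2 * pi * (of_int (\<lfloor>y\<rfloor> + e n) - y) / N n"
      unfolding x_def y_def using that by (simp add: field_simps)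
    ultimately show ?thesis using that by (simp add: abs_mult divide_right_mono)
  qed
  have "filterlim (\<lambda>n. real (N n)) at_top sequentially"
    using filterlim_compose[OF filterlim_real_sequentially assms(1)] by simp
  then have "(\<lambda>n. 2 * pi / N n) \<longlonglongrightarrow> 0"
    by (intro tendsto_divide_0[OF tendsto_const] filterlim_at_top_imp_at_infinity)
  moreover have "eventually (\<lambda>n. 1 \<le> N n) sequentially"
    using assms(1) filterlim_at_top by blast
  then have "eventually (\<lambda>n. norm (x n - \<theta>) \<le> 2 * pi / N n) sequentially"
    by eventually_elim (rule bound, simp)
  ultimately have "(\<lambda>n. x n - \<theta>) \<longlonglongrightarrow> 0" by (rule Lim_null_comparison[rotated])
  then have "(\<lambda>n. cis (x n)) \<longlonglongrightarrow> cis \<theta>" by (intro tendsto_cis) (simp add: LIM_zero_iff)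
  then show ?thesis unfolding root_approx_def x_def .
qed

lemma unit_or_zero_pair_approx:
  assumes "unit_or_zero_pair l m"
  obtains a b where "a \<longlonglongrightarrow> l" "b \<longlonglongrightarrow> m" "\<And>n. a n \<noteq> b n"
    "\<And>n. a n ^ 2^(n+2) = a n" "\<And>n. b n ^ 2^(n+2) = b n"
proof -
  define N :: "nat \<Rightarrow> nat" where "N n = 2^(n+2) - 1" for n
  have N: "N n \<ge> 2" "2^(n+2) = Suc (N n)" for n
    using less_exp[of "n+2"] unfolding N_def by simp_all
  have "filterlim N at_top sequentially"
    by (rule filterlim_subseq) (simp add: strict_mono_def N_def diff_less_mono power_strict_increasing)
  define approx where
    "approx z e n = (if z = 0 then 0 else root_approx (N n) (Arg z) e)" for z e n
  have approx_fixed: "approx z e n ^ 2^(n+2) = approx z e n" for z e n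
    using root_approx_power[of "N n"] N[of n] by (simp add: approx_def)
  have approx_tendsto: "(\<lambda>n. approx z (e n) n) \<longlonglongrightarrow> z"
    if "z = 0 \<or> cmod z = 1" "\<And>n. e n \<in> {0..1}" for z e
  proof (cases "z = 0")
    case False
    then have "cis (Arg z) = z" using that(1) by (simp add: cis_Arg sgn_eq)
    moreover have "(\<lambda>n. root_approx (N n) (Arg z) (e n)) \<longlonglongrightarrow> cis (Arg z)"
      using root_approx_tendsto \<open>filterlim N at_top sequentially\<close> that(2) by blast
    ultimately show ?thesis using False by (simp add: approx_def)
  qed (simp add: approx_def)
  have approx_nonzero: "approx z e n \<noteq> 0" if "z \<noteq> 0" for z e n
    using that by (simp add: approx_def root_approx_def)
  \<comment> \<open>if both approximations coincide, move the one of m to the next root of unity\<close>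
  define e where "e n = (if approx m 0 n = approx l 0 n then 1 else (0::int))" for n
  show ?thesis
  proof
    show "(\<lambda>n. approx l 0 n) \<longlonglongrightarrow> l" "(\<lambda>n. approx m (e n) n) \<longlonglongrightarrow> m"
      using assms approx_tendsto unfolding unit_or_zero_pair_def e_def by auto
    show "approx l 0 n \<noteq> approx m (e n) n" for n
      using assms approx_nonzero root_approx_Suc_neq[OF N(1), of n "Arg m" 0]
      unfolding unit_or_zero_pair_def e_def approx_def by auto
  qed (rule approx_fixed)+
qed

lemma periodic_pt_upper_triangular:
  assumes "(T::cmat2)$2$1 = 0" "T$1$1 \<noteq> T$2$2" "k \<ge> 1"
    and "T$1$1 ^ (2^k) = T$1$1" "T$2$2 ^ (2^k) = T$2$2"
  shows "periodic_pt T"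
proof -
  have "(T$1$1 - T$2$2) * (Phi_Id ^^ k) T $ 1 $ 2 = (T$1$1 - T$2$2) * T$1$2"
    using funpow_Phi_Id_upper_triangular[OF assms(1), of k] assms(4,5) by (simp add: mult.commute)
  then have "(Phi_Id ^^ k) T = T"
    using funpow_Phi_Id_upper_triangular[OF assms(1), of k] assms by (simp add: mat2_eq_iff)
  then show ?thesis using assms(3) unfolding periodic_pt_def by blast
qed

lemma upper_triangular_in_closure_periodic:
  assumes "(T::cmat2)$2$1 = 0" "unit_or_zero_pair (T$1$1) (T$2$2)"
  shows "T \<in> closure {M. periodic_pt M}"
proof -
  obtain a b where ab: "a \<longlonglongrightarrow> T$1$1" "b \<longlonglongrightarrow> T$2$2" "\<And>n. a n \<noteq> b n"
    "\<And>n. a n ^ 2^(n+2) = a n" "\<And>n. b n ^ 2^(n+2) = b n"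
    using unit_or_zero_pair_approx[OF assms(2)] by blast
  define D :: "nat \<Rightarrow> cmat2" where "D n = vector [vector [a n, T$1$2], vector [0, b n]]" for n
  have "D \<longlonglongrightarrow> T"
  proof (rule vec_tendstoI)+
    fix i j :: 2
    show "(\<lambda>n. D n $ i $ j) \<longlonglongrightarrow> T $ i $ j"
      using exhaust_2[of i] exhaust_2[of j] ab(1,2) assms(1) by (auto simp: D_def)
  qed
  moreover have "periodic_pt (D n)" for n
    using ab(3-5) by (intro periodic_pt_upper_triangular[of _ "n+2"]) (simp_all add: D_def)
  ultimately show ?thesis unfolding closure_sequential by blast
qed

lemma similar_in_closure_periodic:
  assumes "P ** Q = (mat 1 :: cmat2)" "Q ** P = mat 1" "T \<in> closure {M. periodic_pt M}"
  shows "P ** T ** Q \<in> closure {M. periodic_pt M}"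
proof -
  have "continuous_on UNIV (\<lambda>X::cmat2. P ** X ** Q)"
    unfolding matrix_matrix_mult_def by (intro continuous_intros)
  moreover have "(\<lambda>X. P ** X ** Q) ` {M. periodic_pt M} \<subseteq> closure {M. periodic_pt M}"
    using periodic_pt_similar_iff[OF assms(1,2)] closure_subset by blast
  ultimately show ?thesis
    using image_closure_subset[of _ "\<lambda>X. P ** X ** Q"] assms(3) closed_closure
    by (blast intro: continuous_on_subset)
qed

lemma Lambda_subset_closure_periodic:
  "{mat 0} \<union> Lambda0 \<union> Lambda1 \<union> Lambda2 \<subseteq> closure {M. periodic_pt M}"
proof
  fix M :: cmat2
  assume M: "M \<in> {mat 0} \<union> Lambda0 \<union> Lambda1 \<union> Lambda2"
  show "M \<in> closure {M. periodic_pt M}"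
  proof (cases "M = mat 0")
    case True
    have "periodic_pt (mat 0)"
      unfolding periodic_pt_def by (intro exI[of _ 1]) (simp add: Phi_Id_def mat2_eq_iff)
    then show ?thesis using True closure_subset by blast
  next
    case False
    obtain P Q T :: cmat2 where PQ: "P ** Q = mat 1" "Q ** P = mat 1"
      and T: "T$2$1 = 0" "M = P ** T ** Q" "trace M = T$1$1 + T$2$2" "det M = T$1$1 * T$2$2"
      by (rule cmat2_triangularize)
    have "unit_or_zero_pair (T$1$1) (T$2$2)"
      using M False T(3,4) Lambda_iff_unit_or_zero_pair by blast
    then show ?thesis
      using upper_triangular_in_closure_periodic similar_in_closure_periodic PQ T by auto
  qed
qed

theorem proposition3p4:
  shows "closure {M :: cmat2. periodic_pt M} = {mat 0} \<union> Lambda0 \<union> Lambda1 \<union> Lambda2"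
proof
  show "closure {M. periodic_pt M} \<subseteq> {mat 0} \<union> Lambda0 \<union> Lambda1 \<union> Lambda2"
    using closed_Lambda periodic_pt_in_Lambda by (intro closure_minimal) auto
  show "{mat 0} \<union> Lambda0 \<union> Lambda1 \<union> Lambda2 \<subseteq> closure {M. periodic_pt M}"
    by (rule Lambda_subset_closure_periodic)
qed

end
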